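(* For every formula with placeholders $\varphi$ and all formulas $\psi_1,\psi_2$: $\mathbf{GF}\,\varphi[\psi_1\mathbf{W}\psi_2] \equiv \mathbf{GF}\,\varphi[\psi_1\mathbf{U}\psi_2] \vee (\mathbf{FG}\psi_1 \wedge \mathbf{GF}\,\varphi[\mathbf{true}])$ and $\mathbf{FG}\,\varphi[\psi_1\mathbf{U}\psi_2] \equiv (\mathbf{GF}\psi_2 \wedge \mathbf{FG}\,\varphi[\psi_1\mathbf{W}\psi_2]) \vee \mathbf{FG}\,\varphi[\mathbf{false}]$.
   Context: Fix a finite set $Ap$ of atomic propositions. A word is an infinite sequence $w = w[0]w[1]\dots$ of letters of $2^{Ap}$, and $w_i$ denotes the suffix $w[i]w[i+1]\dots$. Formulas are generated by $\varphi ::= \mathbf{true} \mid \mathbf{false} \mid a \mid \neg a \mid \varphi\wedge\varphi \mid \varphi\vee\varphi \mid \mathbf{X}\varphi \mid \varphi\,\mathbf{U}\,\varphi \mid \varphi\,\mathbf{W}\,\varphi \mid \mathbf{GF}\varphi \mid \mathbf{FG}\varphi$ ($a\in Ap$), where $\mathbf{GF}$, $\mathbf{FG}$ are single unary operators. Semantics: $w\models a$ iff $a\in w[0]$, $w\models\neg a$ iff $a\notin w[0]$, Boolean constants and connectives as usual; $w\models\mathbf{X}\varphi$ iff $w_1\models\varphi$; $w\models\varphi\mathbf{U}\psi$ iff $\exists k$: $w_k\models\psi$ and $\forall j<k$: $w_j\models\varphi$; $w\models\varphi\mathbf{W}\psi$ iff ($\forall k$: $w_k\models\varphi$) or $w\models\varphi\mathbf{U}\psi$;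 $w\models\mathbf{GF}\varphi$ iff $w_k\models\varphi$ for infinitely many $k$; $w\models\mathbf{FG}\varphi$ iff $\exists n\,\forall k\geq n$: $w_k\models\varphi$. $\varphi\equiv\psi$ means both formulas are satisfied by exactly the same words. A formula with placeholders is a formula over $Ap\cup\{\star\}$, where $\star$ is a special fresh atomic proposition, with at least one occurrence of $\star$ and no occurrence of $\neg\star$; for such $\varphi$ and a formula $\psi$, $\varphi[\psi]$ denotes the result of substituting $\psi$ for every occurrence of $\star$; substitution binds more strongly than any operator, so $\mathbf{GF}\,\varphi[\psi]$ means $\mathbf{GF}(\varphi[\psi])$. *)

theory Defs
  imports Main
begin

datatype 'a ltl =
    LTrue
  | LFalse
  | Prop 'a
  | NProp 'a
  | And "'a ltl" "'a ltl"
  | Or "'a ltl" "'a ltl"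
  | Next "'a ltl"
  | Until "'a ltl" "'a ltl"
  | WUntil "'a ltl" "'a ltl"
  | GF "'a ltl"
  | FG "'a ltl"

type_synonym 'a word = "nat \<Rightarrow> 'a set"

definition suffix :: "nat \<Rightarrow> 'a word \<Rightarrow> 'a word" where
  "suffix i w = (\<lambda>j. w (i + j))"

fun models :: "'a word \<Rightarrow> 'a ltl \<Rightarrow> bool" (infix "\<Turnstile>" 50) where
  "w \<Turnstile> LTrue = True"
| "w \<Turnstile> LFalse = False"
| "w \<Turnstile> Prop a = (a \<in> w 0)"
| "w \<Turnstile> NProp a = (a \<notin> w 0)"
| "w \<Turnstile> And \<phi> \<psi> = (w \<Turnstile> \<phi> \<and> w \<Turnstile> \<psi>)"
| "w \<Turnstile> Or \<phi> \<psi> = (w \<Turnstile> \<phi> \<or> w \<Turnstile> \<psi>)"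
| "w \<Turnstile> Next \<phi> = (suffix 1 w \<Turnstile> \<phi>)"
| "w \<Turnstile> Until \<phi> \<psi> = (\<exists>k. suffix k w \<Turnstile> \<psi> \<and> (\<forall>j<k. suffix j w \<Turnstile> \<phi>))"
| "w \<Turnstile> WUntil \<phi> \<psi> = ((\<forall>k. suffix k w \<Turnstile> \<phi>) \<or>
                          (\<exists>k. suffix k w \<Turnstile> \<psi> \<and> (\<forall>j<k. suffix j w \<Turnstile> \<phi>)))"
| "w \<Turnstile> GF \<phi> = (\<exists>\<^sub>\<infinity>k. suffix k w \<Turnstile> \<phi>)"
| "w \<Turnstile> FG \<phi> = (\<exists>n. \<forall>k\<ge>n. suffix k w \<Turnstile> \<phi>)"

definition ltl_equiv :: "'a ltl \<Rightarrow> 'a ltl \<Rightarrow> bool" (infix "\<equiv>\<^sub>L" 45) where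
  "\<phi> \<equiv>\<^sub>L \<psi> \<longleftrightarrow> (\<forall>w. w \<Turnstile> \<phi> \<longleftrightarrow> w \<Turnstile> \<psi>)"

text \<open>Formulas with placeholders: formulas over Ap \<union> {\<star>}, encoded as 'a option with
  None playing the role of the fresh proposition \<star>.\<close>
fun props :: "'a ltl \<Rightarrow> 'a set" where
  "props LTrue = {}"
| "props LFalse = {}"
| "props (Prop a) = {a}"
| "props (NProp a) = {}"
| "props (And \<phi> \<psi>) = props \<phi> \<union> props \<psi>"
| "props (Or \<phi> \<psi>) = props \<phi> \<union> props \<psi>"
| "props (Next \<phi>) = props \<phi>"
| "props (Until \<phi> \<psi>) = props \<phi> \<union> props \<psi>"
| "props (WUntil \<phi> \<psi>) = props \<phi> \<union> props \<psi>"
| "props (GF \<phi>) = props \<phi>"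
| "props (FG \<phi>) = props \<phi>"

fun nprops :: "'a ltl \<Rightarrow> 'a set" where
  "nprops LTrue = {}"
| "nprops LFalse = {}"
| "nprops (Prop a) = {}"
| "nprops (NProp a) = {a}"
| "nprops (And \<phi> \<psi>) = nprops \<phi> \<union> nprops \<psi>"
| "nprops (Or \<phi> \<psi>) = nprops \<phi> \<union> nprops \<psi>"
| "nprops (Next \<phi>) = nprops \<phi>"
| "nprops (Until \<phi> \<psi>) = nprops \<phi> \<union> nprops \<psi>"
| "nprops (WUntil \<phi> \<psi>) = nprops \<phi> \<union> nprops \<psi>"
| "nprops (GF \<phi>) = nprops \<phi>"
| "nprops (FG \<phi>) = nprops \<phi>"

definition placeholder_formula :: "'a option ltl \<Rightarrow> bool" where
  "placeholder_formula \<phi> \<longleftrightarrow> None \<in> props \<phi> \<and> None \<notin> nprops \<phi>"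

text \<open>Substitution \<phi>[\<psi>]: replace every occurrence of \<star> by \<psi>.  (The case of a negated
  \<star> never arises for placeholder formulas; it is mapped to false arbitrarily.)\<close>
fun subst :: "'a option ltl \<Rightarrow> 'a ltl \<Rightarrow> 'a ltl" where
  "subst LTrue \<psi> = LTrue"
| "subst LFalse \<psi> = LFalse"
| "subst (Prop None) \<psi> = \<psi>"
| "subst (Prop (Some a)) \<psi> = Prop a"
| "subst (NProp None) \<psi> = LFalse"
| "subst (NProp (Some a)) \<psi> = NProp a"
| "subst (And \<phi>1 \<phi>2) \<psi> = And (subst \<phi>1 \<psi>) (subst \<phi>2 \<psi>)"
| "subst (Or \<phi>1 \<phi>2) \<psi> = Or (subst \<phi>1 \<psi>) (subst \<phi>2 \<psi>)"
| "subst (Next \<phi>) \<psi> = Next (subst \<phi> \<psi>)"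
| "subst (Until \<phi>1 \<phi>2) \<psi> = Until (subst \<phi>1 \<psi>) (subst \<phi>2 \<psi>)"
| "subst (WUntil \<phi>1 \<phi>2) \<psi> = WUntil (subst \<phi>1 \<psi>) (subst \<phi>2 \<psi>)"
| "subst (GF \<phi>) \<psi> = GF (subst \<phi> \<psi>)"
| "subst (FG \<phi>) \<psi> = FG (subst \<phi> \<psi>)"

end

theory Submission
  imports Defs "HOL-Library.Infinite_Set"
begin

text \<open>GF and FG only see the eventual behaviour of their argument, and substitution into a
  formula is monotone and preserves agreement on all later suffixes.  If \<open>\<psi>1\<close> fails
  infinitely often, or \<open>\<psi>2\<close> holds infinitely often, then \<open>\<psi>1 W \<psi>2\<close> and \<open>\<psi>1 U \<psi>2\<close>
  agree on every suffix; otherwise \<open>\<psi>1 W \<psi>2\<close> eventually agrees with true, resp.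
  \<open>\<psi>1 U \<psi>2\<close> with false.  The remaining disjunct is absorbed by monotonicity.  Since
  \<open>subst\<close> maps a negated placeholder to false, substitution is monotone for every formula.\<close>

lemma suffix_suffix [simp]: "suffix i (suffix j w) = suffix (j + i) w"
  by (simp add: suffix_def add.assoc)

lemma suffix_0 [simp]: "suffix 0 w = w"
  by (simp add: suffix_def)

lemma models_FG_iff_MOST: "w \<Turnstile> FG \<phi> \<longleftrightarrow> (MOST k. suffix k w \<Turnstile> \<phi>)"
  by (simp add: MOST_nat_le)

lemma subst_mono_suffix:
  assumes "\<And>i. suffix i w \<Turnstile> a \<Longrightarrow> suffix i w \<Turnstile> b"
  shows "suffix k w \<Turnstile> subst \<phi> a \<Longrightarrow> suffix k w \<Turnstile> subst \<phi> b"
proof (induction \<phi> arbitrary: k)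
  case (Prop x)
  then show ?case using assms by (cases x) simp_all
next
  case (NProp x)
  then show ?case by (cases x) simp_all
next
  case (GF \<phi>)
  then show ?case by (auto elim!: INFM_mono)
qed (simp; blast)+

lemma subst_cong_suffix:
  assumes "\<And>i. suffix i w \<Turnstile> a \<longleftrightarrow> suffix i w \<Turnstile> b"
  shows "suffix k w \<Turnstile> subst \<phi> a \<longleftrightarrow> suffix k w \<Turnstile> subst \<phi> b"
  using subst_mono_suffix[of w a b] subst_mono_suffix[of w b a] assms by blast

lemma subst_cong_eventually:
  assumes "MOST i. suffix i w \<Turnstile> a \<longleftrightarrow> suffix i w \<Turnstile> b"
  shows "MOST k. suffix k w \<Turnstile> subst \<phi> a \<longleftrightarrow> suffix k w \<Turnstile> subst \<phi> b"
proof -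
  obtain n where n: "\<And>i. i \<ge> n \<Longrightarrow> suffix i w \<Turnstile> a \<longleftrightarrow> suffix i w \<Turnstile> b"
    using assms by (auto simp: MOST_nat_le)
  have shifted: "suffix k (suffix n w) \<Turnstile> subst \<phi> a \<longleftrightarrow> suffix k (suffix n w) \<Turnstile> subst \<phi> b"
    for k by (rule subst_cong_suffix) (simp add: n)
  have "suffix k w \<Turnstile> subst \<phi> a \<longleftrightarrow> suffix k w \<Turnstile> subst \<phi> b" if "k \<ge> n" for k
    using shifted[of "k - n"] that by simp
  then show ?thesis
    unfolding MOST_nat_le by blast
qed

lemma GF_subst_mono:
  assumes "\<And>v. v \<Turnstile> a \<Longrightarrow> v \<Turnstile> b" and "w \<Turnstile> GF (subst \<phi> a)"
  shows "w \<Turnstile> GF (subst \<phi> b)"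
  using assms(2) by (auto elim!: INFM_mono intro: subst_mono_suffix assms(1))

lemma FG_subst_mono:
  assumes "\<And>v. v \<Turnstile> a \<Longrightarrow> v \<Turnstile> b" and "w \<Turnstile> FG (subst \<phi> a)"
  shows "w \<Turnstile> FG (subst \<phi> b)"
  using assms(2) by (auto intro: subst_mono_suffix assms(1))

lemma GF_subst_cong:
  assumes "MOST i. suffix i w \<Turnstile> a \<longleftrightarrow> suffix i w \<Turnstile> b"
  shows "w \<Turnstile> GF (subst \<phi> a) \<longleftrightarrow> w \<Turnstile> GF (subst \<phi> b)"
  unfolding models.simps(10) using subst_cong_eventually[OF assms] by (rule frequently_cong)

lemma FG_subst_cong:
  assumes "MOST i. suffix i w \<Turnstile> a \<longleftrightarrow> suffix i w \<Turnstile> b"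
  shows "w \<Turnstile> FG (subst \<phi> a) \<longleftrightarrow> w \<Turnstile> FG (subst \<phi> b)"
  unfolding models_FG_iff_MOST using subst_cong_eventually[OF assms] by (rule eventually_cong)

lemma WUntil_iff_Until:
  assumes "(\<exists>k. \<not> suffix k w \<Turnstile> a) \<or> (\<exists>k. suffix k w \<Turnstile> b)"
  shows "w \<Turnstile> WUntil a b \<longleftrightarrow> w \<Turnstile> Until a b"
  using assms by auto

lemma suffix_WUntil_iff_Until:
  assumes "\<not> w \<Turnstile> FG a \<or> w \<Turnstile> GF b"
  shows "suffix i w \<Turnstile> WUntil a b \<longleftrightarrow> suffix i w \<Turnstile> Until a b"
proof (rule WUntil_iff_Until)
  from assms obtain k where "k \<ge> i" "\<not> suffix k w \<Turnstile> a \<or> suffix k w \<Turnstile> b"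
    by (auto simp: INFM_nat_le)
  then have "\<not> suffix (k - i) (suffix i w) \<Turnstile> a \<or> suffix (k - i) (suffix i w) \<Turnstile> b"
    by simp
  then show "(\<exists>k. \<not> suffix k (suffix i w) \<Turnstile> a) \<or> (\<exists>k. suffix k (suffix i w) \<Turnstile> b)"
    by blast
qed

lemma MOST_suffix_WUntil_if_FG:
  assumes "w \<Turnstile> FG a"
  shows "MOST i. suffix i w \<Turnstile> WUntil a b"
proof -
  from assms obtain n where "\<forall>k\<ge>n. suffix k w \<Turnstile> a"
    by auto
  then have "suffix i w \<Turnstile> WUntil a b" if "i \<ge> n" for i
    using that by simp
  then show ?thesis
    unfolding MOST_nat_le by blast
qed

lemma MOST_suffix_not_Until_if_not_GF:
  assumes "\<not> w \<Turnstile> GF b"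
  shows "MOST i. \<not> suffix i w \<Turnstile> Until a b"
proof -
  from assms obtain n where "\<forall>k\<ge>n. \<not> suffix k w \<Turnstile> b"
    by (auto simp: INFM_nat_le)
  then have "\<not> suffix i w \<Turnstile> Until a b" if "i \<ge> n" for i
    using that by simp
  then show ?thesis
    unfolding MOST_nat_le by blast
qed

lemma GF_subst_WUntil_equiv:
  "GF (subst \<phi> (WUntil \<psi>1 \<psi>2)) \<equiv>\<^sub>L
     Or (GF (subst \<phi> (Until \<psi>1 \<psi>2))) (And (FG \<psi>1) (GF (subst \<phi> LTrue)))"
  unfolding ltl_equiv_def
proof
  fix w
  show "w \<Turnstile> GF (subst \<phi> (WUntil \<psi>1 \<psi>2)) \<longleftrightarrow>
    w \<Turnstile> Or (GF (subst \<phi> (Until \<psi>1 \<psi>2))) (And (FG \<psi>1) (GF (subst \<phi> LTrue)))"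
  proof (cases "w \<Turnstile> FG \<psi>1")
    case True
    have "MOST i. suffix i w \<Turnstile> WUntil \<psi>1 \<psi>2 \<longleftrightarrow> suffix i w \<Turnstile> LTrue"
      using MOST_suffix_WUntil_if_FG[OF True] by (simp only: models.simps(1) simp_thms)
    then have "w \<Turnstile> GF (subst \<phi> (WUntil \<psi>1 \<psi>2)) \<longleftrightarrow> w \<Turnstile> GF (subst \<phi> LTrue)"
      by (rule GF_subst_cong)
    moreover have "w \<Turnstile> GF (subst \<phi> (Until \<psi>1 \<psi>2)) \<Longrightarrow> w \<Turnstile> GF (subst \<phi> LTrue)"
      by (rule GF_subst_mono[of "Until \<psi>1 \<psi>2"]) simp_all
    ultimately show ?thesis
      using True by (simp only: models.simps(5,6)) blast
  next
    case False
    then have "w \<Turnstile> GF (subst \<phi> (WUntil \<psi>1 \<psi>2)) \<longleftrightarrow> w \<Turnstile> GF (subst \<phi> (Until \<psi>1 \<psi>2))"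
      by (intro GF_subst_cong always_eventually allI suffix_WUntil_iff_Until) simp
    with False show ?thesis
      by (simp only: models.simps(5,6)) blast
  qed
qed

lemma FG_subst_Until_equiv:
  "FG (subst \<phi> (Until \<psi>1 \<psi>2)) \<equiv>\<^sub>L
     Or (And (GF \<psi>2) (FG (subst \<phi> (WUntil \<psi>1 \<psi>2)))) (FG (subst \<phi> LFalse))"
  unfolding ltl_equiv_def
proof
  fix w
  show "w \<Turnstile> FG (subst \<phi> (Until \<psi>1 \<psi>2)) \<longleftrightarrow>
    w \<Turnstile> Or (And (GF \<psi>2) (FG (subst \<phi> (WUntil \<psi>1 \<psi>2)))) (FG (subst \<phi> LFalse))"
  proof (cases "w \<Turnstile> GF \<psi>2")
    case True
    then have "w \<Turnstile> FG (subst \<phi> (WUntil \<psi>1 \<psi>2)) \<longleftrightarrow> w \<Turnstile> FG (subst \<phi> (Until \<psi>1 \<psi>2))"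
      by (intro FG_subst_cong always_eventually allI suffix_WUntil_iff_Until) simp
    moreover have "w \<Turnstile> FG (subst \<phi> LFalse) \<Longrightarrow> w \<Turnstile> FG (subst \<phi> (Until \<psi>1 \<psi>2))"
      by (rule FG_subst_mono[of LFalse]) simp_all
    ultimately show ?thesis
      using True by (simp only: models.simps(5,6)) blast
  next
    case False
    have "MOST i. suffix i w \<Turnstile> Until \<psi>1 \<psi>2 \<longleftrightarrow> suffix i w \<Turnstile> LFalse"
      using MOST_suffix_not_Until_if_not_GF[OF False] by (simp only: models.simps(2) simp_thms)
    then have "w \<Turnstile> FG (subst \<phi> (Until \<psi>1 \<psi>2)) \<longleftrightarrow> w \<Turnstile> FG (subst \<phi> LFalse)"
      by (rule FG_subst_cong)
    with False show ?thesis
      by (simp only: models.simps(5,6)) blast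
  qed
qed

theorem lemma3:
  fixes \<phi> :: "('a::finite) option ltl" and \<psi>1 \<psi>2 :: "'a ltl"
  assumes "placeholder_formula \<phi>"
  shows "(GF (subst \<phi> (WUntil \<psi>1 \<psi>2)) \<equiv>\<^sub>L
           Or (GF (subst \<phi> (Until \<psi>1 \<psi>2))) (And (FG \<psi>1) (GF (subst \<phi> LTrue)))) \<and>
         (FG (subst \<phi> (Until \<psi>1 \<psi>2)) \<equiv>\<^sub>L
           Or (And (GF \<psi>2) (FG (subst \<phi> (WUntil \<psi>1 \<psi>2)))) (FG (subst \<phi> LFalse)))"
  using GF_subst_WUntil_equiv FG_subst_Until_equiv by blast

end
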